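(* Let $n\ge 1$, $N=n^2$, and let $Q$ be an $n\times n$ square block of grid cells. For every bijection $\pi:Q\to Q$ there is a set $O$ of $4N+1$ obstacle cells, all contained in a $(3N+1)\times(3N+1)$ square region of the grid that also contains $Q$, with the following property. Place $N$ robots on the cells of $Q$ (one per cell) with the obstacle set $O$, and apply the four force-field moves $\langle u,r,d,l\rangle$ in this order. Then, for every $c\in Q$, the robot that started at $c$ ends at cell $\pi(c)$. Moreover, if every robot moves at speed $v$ cells per second, the four moves are completed within total time $10N/v$.
   Context: Model. The workspace is the integer grid $\mathbb{Z}^2$ of unit cells. A configuration consists of a finite set $O\subset\mathbb{Z}^2$ of fixed obstacle cells and finitely many labeled robots, each occupying one cell, with no two robots in the same cell and no robot on an obstacle cell. There are four commands $u,r,d,l$ with direction vectors $e_u=(0,1)$, $e_r=(1,0)$, $e_d=(0,-1)$, $e_l=(-1,0)$. Applying command $x$ (a force-field move) moves all robots simultaneously in direction $e_x$ as far as possible, each stopping when it hits an obstacle or a stopped robot: precisely, for a robot at cell $p$, let $q=p+s e_x$ ($s\ge1$) be the first obstacle cell on the ray $p+te_x$, $t=1,2,\dots$; the robot ends at cell $q-(k+1)e_x$, where $k$ is the number of robots located at cells $p+te_x$ with $0<t<s$. (The move is only considered when each such ray meets an obstacle.) A move sequence such as $\langle u,r,d,l\rangle$ means applying these commands one after another. *)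

theory Defs
  imports Main "HOL.Real"
begin

type_synonym cell = "int \<times> int"

datatype cmd = CU | CR | CD | CL

fun dvec :: "cmd \<Rightarrow> int \<times> int" where
  "dvec CU = (0, 1)" | "dvec CR = (1, 0)" | "dvec CD = (0, -1)" | "dvec CL = (-1, 0)"

definition shift :: "cell \<Rightarrow> int \<Rightarrow> cmd \<Rightarrow> cell" where
  "shift p t x = (fst p + t * fst (dvec x), snd p + t * snd (dvec x))"

definition hits :: "cell set \<Rightarrow> cmd \<Rightarrow> cell \<Rightarrow> bool" where
  "hits Obs x p = (\<exists>t::nat. 1 \<le> t \<and> shift p (int t) x \<in> Obs)"

definition first_obs :: "cell set \<Rightarrow> cmd \<Rightarrow> cell \<Rightarrow> nat" where
  "first_obs Obs x p = (LEAST t::nat. 1 \<le> t \<and> shift p (int t) x \<in> Obs)"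

text \<open>number of cells travelled: s - (k+1), with k the robots strictly between p and the obstacle
  (P is the set of all robot positions)\<close>
definition travel :: "cell set \<Rightarrow> cell set \<Rightarrow> cmd \<Rightarrow> cell \<Rightarrow> nat" where
  "travel Obs P x p = first_obs Obs x p - 1
     - card {t::nat. 0 < t \<and> t < first_obs Obs x p \<and> shift p (int t) x \<in> P}"

definition move_robot :: "cell set \<Rightarrow> cell set \<Rightarrow> cmd \<Rightarrow> cell \<Rightarrow> cell" where
  "move_robot Obs P x p = shift p (int (travel Obs P x p)) x"

text \<open>Robots are labelled by the elements of L; pos gives the current cell of each robot.\<close>
definition apply_cmd :: "cell set \<Rightarrow> cell set \<Rightarrow> cmd \<Rightarrow> (cell \<Rightarrow> cell) \<Rightarrow> (cell \<Rightarrow> cell)" where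
  "apply_cmd Obs L x pos = (\<lambda>c. move_robot Obs (pos ` L) x (pos c))"

definition cmd_defined :: "cell set \<Rightarrow> cell set \<Rightarrow> cmd \<Rightarrow> (cell \<Rightarrow> cell) \<Rightarrow> bool" where
  "cmd_defined Obs L x pos = (\<forall>c\<in>L. hits Obs x (pos c))"

definition cmd_time :: "cell set \<Rightarrow> cell set \<Rightarrow> cmd \<Rightarrow> (cell \<Rightarrow> cell) \<Rightarrow> real \<Rightarrow> real" where
  "cmd_time Obs L x pos v = Max ((\<lambda>c. real (travel Obs (pos ` L) x (pos c))) ` L) / v"

fun run :: "cell set \<Rightarrow> cell set \<Rightarrow> cmd list \<Rightarrow> (cell \<Rightarrow> cell) \<Rightarrow> cell \<Rightarrow> cell" where
  "run Obs L [] pos = pos"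
| "run Obs L (x # xs) pos = run Obs L xs (apply_cmd Obs L x pos)"

fun run_defined :: "cell set \<Rightarrow> cell set \<Rightarrow> cmd list \<Rightarrow> (cell \<Rightarrow> cell) \<Rightarrow> bool" where
  "run_defined Obs L [] pos = True"
| "run_defined Obs L (x # xs) pos = (cmd_defined Obs L x pos \<and> run_defined Obs L xs (apply_cmd Obs L x pos))"

fun run_time :: "cell set \<Rightarrow> cell set \<Rightarrow> cmd list \<Rightarrow> (cell \<Rightarrow> cell) \<Rightarrow> real \<Rightarrow> real" where
  "run_time Obs L [] pos v = 0"
| "run_time Obs L (x # xs) pos v = cmd_time Obs L x pos v + run_time Obs L xs (apply_cmd Obs L x pos) v"

definition block :: "int \<Rightarrow> int \<Rightarrow> int \<Rightarrow> cell set" where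
  "block a b m = {(a + i, b + j) | i j. 0 \<le> i \<and> i < m \<and> 0 \<le> j \<and> j < m}"

end

theory Submission
  imports Defs
begin

(* Let Q be the k x k block with lower-left corner (a, b), k = n, and let a robot start
   at c = (a + i, b + j). Number the start cells column by column, rank c = i k + j, and the targets
   row by row, slot c = ty k + tx where pi c = (a + tx, b + ty). The obstacles are
     - caps above Q: after move u, column i is stacked so that the robot from c sits in row
       b + k + rank c, i.e. every robot has a row of its own;
     - right stoppers: in move r each robot runs freely to column a + k + 2 slot c;
     - down stoppers (at even column offsets, the right stoppers being at odd ones): in move d each
       robot falls freely into its target row b + ty;
     - a wall at column a - 1: in move l the robots of a target row stand in the order of their
       target columns and get packed onto exactly those columns. *)

lemma block_mem [simp]:
  "((x, y) \<in> block a b m) \<longleftrightarrow> a \<le> x \<and> x < a + m \<and> b \<le> y \<and> y < b + m"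
proof
  assume "(x, y) \<in> block a b m"
  then show "a \<le> x \<and> x < a + m \<and> b \<le> y \<and> y < b + m" unfolding block_def by auto
next
  assume "a \<le> x \<and> x < a + m \<and> b \<le> y \<and> y < b + m"
  then show "(x, y) \<in> block a b m" unfolding block_def
    by (intro CollectI exI[of _ "x - a"] exI[of _ "y - b"]) auto
qed

lemma block_eq_product: "block a b m = {a..<a + m} \<times> {b..<b + m}"
  by auto

lemma shift_simps [simp]:
  "shift p t CU = (fst p, snd p + t)" "shift p t CR = (fst p + t, snd p)"
  "shift p t CD = (fst p, snd p - t)" "shift p t CL = (fst p - t, snd p)"
  by (simp_all add: shift_def)

lemma move_robot_first_obstacle:
  assumes s: "1 \<le> s" and hit: "shift p (int s) x \<in> Obs"
    and clear: "\<And>t. 1 \<le> t \<Longrightarrow> t < s \<Longrightarrow> shift p (int t) x \<notin> Obs"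
    and ahead: "card {t. 0 < t \<and> t < s \<and> shift p (int t) x \<in> P} = m"
  shows "hits Obs x p" "int (travel Obs P x p) = int s - 1 - int m"
    "move_robot Obs P x p = shift p (int s - 1 - int m) x"
proof -
  show "hits Obs x p" using s hit unfolding hits_def by blast
  have first: "first_obs Obs x p = s" unfolding first_obs_def
    by (rule Least_equality) (use s hit clear in force)+
  have "{t. 0 < t \<and> t < s \<and> shift p (int t) x \<in> P} \<subseteq> {1..<s}" by auto
  then have "m \<le> s - 1" using ahead card_mono[of "{1..<s}"] by fastforce
  moreover have "travel Obs P x p = s - 1 - m" using first ahead unfolding travel_def by simp
  ultimately show "int (travel Obs P x p) = int s - 1 - int m" using s by linarith
  then show "move_robot Obs P x p = shift p (int s - 1 - int m) x"
    unfolding move_robot_def by simp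
qed

lemma apply_cmd_agree:
  assumes "\<forall>c\<in>L. pos c = f c" "c \<in> L"
  shows "apply_cmd Obs L x pos c = move_robot Obs (f ` L) x (f c)"
proof -
  have "pos ` L = f ` L" using assms(1) by (auto intro: image_cong)
  then show ?thesis using assms unfolding apply_cmd_def by simp
qed

lemma cmd_time_le:
  assumes "\<forall>c\<in>L. pos c = f c" "finite L" "L \<noteq> {}" "v > 0"
    and "\<And>c. c \<in> L \<Longrightarrow> real (travel Obs (f ` L) x (f c)) \<le> B"
  shows "cmd_time Obs L x pos v \<le> B / v"
proof -
  have "pos ` L = f ` L" using assms(1) by (auto intro: image_cong)
  then have "Max ((\<lambda>c. real (travel Obs (pos ` L) x (pos c))) ` L) \<le> B"
    using assms by (subst Max_le_iff) auto
  then show ?thesis unfolding cmd_time_def using assms(4) by (simp add: divide_right_mono)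
qed

lemma run_through_stages:
  fixes stage :: "nat \<Rightarrow> cell \<Rightarrow> cell" and B :: "nat \<Rightarrow> real"
  assumes "\<forall>c\<in>L. pos c = stage 0 c"
    and "\<And>i c. i < length xs \<Longrightarrow> c \<in> L \<Longrightarrow> hits Obs (xs ! i) (stage i c)"
    and "\<And>i c. i < length xs \<Longrightarrow> c \<in> L \<Longrightarrow>
      move_robot Obs (stage i ` L) (xs ! i) (stage i c) = stage (Suc i) c"
    and "\<And>i c. i < length xs \<Longrightarrow> c \<in> L \<Longrightarrow>
      real (travel Obs (stage i ` L) (xs ! i) (stage i c)) \<le> B i"
    and L: "finite L" "L \<noteq> {}" and v: "v > 0"
  shows "run_defined Obs L xs pos \<and> (\<forall>c\<in>L. run Obs L xs pos c = stage (length xs) c)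
    \<and> run_time Obs L xs pos v \<le> (\<Sum>i<length xs. B i) / v"
  using assms(1-4)
proof (induction xs arbitrary: pos stage B)
  case Nil
  then show ?case by simp
next
  case (Cons x xs)
  let ?pos' = "apply_cmd Obs L x pos"
  have next_stage: "\<forall>c\<in>L. ?pos' c = stage 1 c"
    using apply_cmd_agree[OF Cons.prems(1)] Cons.prems(3)[of 0] by simp
  have IH: "run_defined Obs L xs ?pos' \<and> (\<forall>c\<in>L. run Obs L xs ?pos' c = stage (Suc (length xs)) c)
    \<and> run_time Obs L xs ?pos' v \<le> (\<Sum>i<length xs. B (Suc i)) / v"
  proof (rule Cons.IH)
    fix i c assume "i < length xs" "c \<in> L"
    then show "hits Obs (xs ! i) (stage (Suc i) c)"
      and "move_robot Obs (stage (Suc i) ` L) (xs ! i) (stage (Suc i) c) = stage (Suc (Suc i)) c"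
      and "real (travel Obs (stage (Suc i) ` L) (xs ! i) (stage (Suc i) c)) \<le> B (Suc i)"
      using Cons.prems(2-4)[of "Suc i" c] by simp_all
  qed (use next_stage in simp)
  have "cmd_defined Obs L x pos"
    using Cons.prems(1) Cons.prems(2)[of 0] unfolding cmd_defined_def by simp
  moreover have "cmd_time Obs L x pos v \<le> B 0 / v"
    using cmd_time_le[OF Cons.prems(1) L v, where x=x and B="B 0"] Cons.prems(4)[of 0] by simp
  moreover have "(\<Sum>i<length (x # xs). B i) = B 0 + (\<Sum>i<length xs. B (Suc i))"
    by (simp only: length_Cons sum.lessThan_Suc_shift)
  ultimately show ?case using IH by (simp add: add_divide_distrib)
qed

lemma digit_pair_less:
  fixes i i' j j' k :: int
  assumes "0 \<le> j" "j < k" "0 \<le> j'" "i < i'"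
  shows "i * k + j < i' * k + j'"
proof -
  have "(i + 1) * k \<le> i' * k" using assms by (intro mult_right_mono) auto
  then show ?thesis using assms by (simp add: algebra_simps)
qed

lemma digit_pair_inj:
  fixes i i' j j' k :: int
  assumes "0 \<le> j" "j < k" "0 \<le> j'" "j' < k" "i * k + j = i' * k + j'"
  shows "i = i' \<and> j = j'"
proof -
  have "\<not> i < i'" using digit_pair_less[of j k j' i i'] assms by auto
  moreover have "\<not> i' < i" using digit_pair_less[of j' k j i' i] assms by auto
  ultimately show ?thesis using assms by simp
qed

lemma digit_pair_bounds:
  fixes i j k :: int
  assumes "0 \<le> i" "i < k" "0 \<le> j" "j < k"
  shows "0 \<le> i * k + j" "i * k + j \<le> k * k - 1" "k \<le> (i + 1) * k" "(i + 1) * k \<le> k * k"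
proof -
  show "k \<le> (i + 1) * k" using assms mult_right_mono[of 1 "i + 1" k] by simp
  show "(i + 1) * k \<le> k * k" using assms by (intro mult_right_mono) auto
  then show "i * k + j \<le> k * k - 1" using assms by (simp add: algebra_simps)
  show "0 \<le> i * k + j" using assms by simp
qed

locale permutation_gadget =
  fixes a b k :: int and \<pi> :: "cell \<Rightarrow> cell"
  assumes k_pos: "1 \<le> k" and \<pi>_bij: "bij_betw \<pi> (block a b k) (block a b k)"
begin

abbreviation Q :: "cell set" where "Q \<equiv> block a b k"

definition rank :: "cell \<Rightarrow> int" where "rank c = (fst c - a) * k + (snd c - b)"
definition tx :: "cell \<Rightarrow> int" where "tx c = fst (\<pi> c) - a"
definition ty :: "cell \<Rightarrow> int" where "ty c = snd (\<pi> c) - b"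
definition slot :: "cell \<Rightarrow> int" where "slot c = ty c * k + tx c"

definition after_up :: "cell \<Rightarrow> cell" where "after_up c = (fst c, b + k + rank c)"
definition after_right :: "cell \<Rightarrow> cell" where "after_right c = (a + k + 2 * slot c, b + k + rank c)"
definition after_down :: "cell \<Rightarrow> cell" where "after_down c = (a + k + 2 * slot c, snd (\<pi> c))"

text \<open>The wall is longer than needed,
  so that the total number of obstacles is exactly 4 k^2 + 1.\<close>
definition obs_up :: "cell set" where "obs_up = (\<lambda>i. (a + i, b + k + (i + 1) * k)) ` {0..<k}"
definition obs_right :: "cell set" where
  "obs_right = (\<lambda>c. (a + k + 2 * slot c + 1, b + k + rank c)) ` Q"
definition obs_down :: "cell set" where "obs_down = (\<lambda>c. (a + k + 2 * slot c, b + ty c - 1)) ` Q"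
definition obs_left :: "cell set" where "obs_left = (\<lambda>y. (a - 1, y)) ` {b .. b + 2 * k * k - k}"
definition obstacles :: "cell set" where
  "obstacles = obs_up \<union> obs_right \<union> obs_down \<union> obs_left"

lemma k_le_kk: "k \<le> k * k"
  using k_pos by (simp add: mult_le_cancel_left1)

lemma cap_bounds: "0 \<le> i \<Longrightarrow> i < k \<Longrightarrow> k \<le> (i + 1) * k \<and> (i + 1) * k \<le> k * k"
  using digit_pair_bounds[of i k 0] k_pos by simp

lemma \<pi>_in_Q: "c \<in> Q \<Longrightarrow> \<pi> c \<in> Q"
  using \<pi>_bij by (auto simp: bij_betw_def)

lemma target_bounds:
  assumes "c \<in> Q" shows "0 \<le> tx c" "tx c < k" "0 \<le> ty c" "ty c < k"
  using \<pi>_in_Q[OF assms] by (cases "\<pi> c"; simp add: tx_def ty_def)+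

lemma slot_bounds: assumes "c \<in> Q" shows "0 \<le> slot c" "slot c \<le> k * k - 1"
  using target_bounds[OF assms] digit_pair_bounds[of "ty c" k "tx c"] unfolding slot_def by auto

lemma rank_bounds: assumes "c \<in> Q" shows "0 \<le> rank c" "rank c \<le> k * k - 1"
  using assms digit_pair_bounds[of "fst c - a" k "snd c - b"] unfolding rank_def
  by (cases c; simp)+

text \<open>Distinct robots get distinct rows after u and distinct columns after r.\<close>
lemma rank_inj: assumes "c \<in> Q" "c' \<in> Q" "rank c = rank c'" shows "c = c'"
  using assms digit_pair_inj[of "snd c - b" k "snd c' - b" "fst c - a" "fst c' - a"]
  by (cases c; cases c') (auto simp: rank_def)

lemma slot_inj: assumes "c \<in> Q" "c' \<in> Q" "slot c = slot c'" shows "c = c'"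
proof -
  have "ty c = ty c' \<and> tx c = tx c'"
    using digit_pair_inj[of "tx c" k "tx c'" "ty c" "ty c'"] target_bounds[OF assms(1)]
      target_bounds[OF assms(2)] assms(3)
    by (simp add: slot_def)
  then have "\<pi> c = \<pi> c'" by (simp add: tx_def ty_def prod_eq_iff)
  then show ?thesis using \<pi>_bij assms by (auto simp: bij_betw_def inj_on_def)
qed

lemma obs_up_mem:
  "(X, Y) \<in> obs_up \<longleftrightarrow> (\<exists>i. 0 \<le> i \<and> i < k \<and> X = a + i \<and> Y = b + k + (i + 1) * k)"
  unfolding obs_up_def by auto
lemma obs_right_mem:
  "(X, Y) \<in> obs_right \<longleftrightarrow> (\<exists>c\<in>Q. X = a + k + 2 * slot c + 1 \<and> Y = b + k + rank c)"
  unfolding obs_right_def by (auto simp del: block_mem)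
lemma obs_down_mem:
  "(X, Y) \<in> obs_down \<longleftrightarrow> (\<exists>c\<in>Q. X = a + k + 2 * slot c \<and> Y = b + ty c - 1)"
  unfolding obs_down_def by (auto simp del: block_mem)
lemma obs_left_mem: "(X, Y) \<in> obs_left \<longleftrightarrow> X = a - 1 \<and> b \<le> Y \<and> Y \<le> b + 2 * k * k - k"
  unfolding obs_left_def by auto

lemma obstacles_mem:
  "z \<in> obstacles \<longleftrightarrow> z \<in> obs_up \<or> z \<in> obs_right \<or> z \<in> obs_down \<or> z \<in> obs_left"
  unfolding obstacles_def by auto

text \<open>Move u: the robot from c = (a + i, b + j) rises until it is stacked below the cap of column i,
  with the k - 1 - j robots of its column that started above it.\<close>

lemma up_ray_clear:
  assumes c: "c \<in> Q" and t: "1 \<le> t" "int t < k + (fst c - a + 1) * k - (snd c - b)"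
  shows "(fst c, snd c + int t) \<notin> obstacles"
proof -
  obtain x y where xy: "c = (x, y)" by fastforce
  have "(x, y + int t) \<notin> obs_up"
  proof
    assume "(x, y + int t) \<in> obs_up"
    then obtain i where "x = a + i" "y + int t = b + k + (i + 1) * k" by (auto simp: obs_up_mem)
    then show False using t xy by simp
  qed
  moreover have "(x, y + int t) \<notin> obs_right" "(x, y + int t) \<notin> obs_down"
    using c xy slot_bounds by (force simp: obs_right_mem obs_down_mem)+
  moreover have "(x, y + int t) \<notin> obs_left" using c xy by (simp add: obs_left_mem)
  ultimately show ?thesis using xy by (simp add: obstacles_mem)
qed

lemma step_up:
  assumes c: "c \<in> Q"
  shows "hits obstacles CU c" "int (travel obstacles Q CU c) = (fst c - a + 1) * k"
    "move_robot obstacles Q CU c = after_up c"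
proof -
  obtain x y where xy: "c = (x, y)" by fastforce
  define i j where "i = x - a" and "j = y - b"
  have ij: "0 \<le> i" "i < k" "0 \<le> j" "j < k" using c xy by (auto simp: i_def j_def)
  have col: "k \<le> (i + 1) * k" using cap_bounds ij by simp
  define s where "s = nat (k + (i + 1) * k - j)"
  have "1 \<le> k + (i + 1) * k - j" using ij col by linarith
  then have s: "1 \<le> s" "int s = k + (i + 1) * k - j" by (simp_all add: s_def)
  have "shift c (int s) CU = (a + i, b + k + (i + 1) * k)" using s xy by (simp add: i_def j_def)
  moreover have "(a + i, b + k + (i + 1) * k) \<in> obs_up" using ij by (auto simp: obs_up_mem)
  ultimately have hit: "shift c (int s) CU \<in> obstacles" by (simp add: obstacles_mem)
  have clear: "shift c (int t) CU \<notin> obstacles" if "1 \<le> t" "t < s" for t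
    using up_ray_clear[OF c, of t] that s xy by (simp add: i_def j_def)
  have "k - j \<le> int s" using s col k_pos by linarith
  then have "{t. 0 < t \<and> t < s \<and> shift c (int t) CU \<in> Q} = {1..<nat (k - j)}"
    using c xy by (auto simp: j_def)
  then have ahead: "card {t. 0 < t \<and> t < s \<and> shift c (int t) CU \<in> Q} = nat (k - j) - 1"
    by simp
  note move = move_robot_first_obstacle[OF s(1) hit clear ahead]
  show "hits obstacles CU c" by (rule move(1))
  show travel: "int (travel obstacles Q CU c) = (fst c - a + 1) * k"
    using move(2) s ij xy by (simp add: i_def j_def)
  show "move_robot obstacles Q CU c = after_up c"
    using move(2,3) travel xy unfolding move_robot_def after_up_def rank_def
    by (simp add: algebra_simps)
qed

text \<open>Move r: after u every robot is alone in its row b + k + rank c, so it runs unobstructed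
  to the stopper that places it in column a + k + 2 * slot c.\<close>

lemma right_ray_clear:
  assumes c: "c \<in> Q" and t: "1 \<le> t" "int t < k + 2 * slot c + 1 - (fst c - a)"
  shows "(fst c + int t, b + k + rank c) \<notin> obstacles"
proof -
  obtain x y where xy: "c = (x, y)" by fastforce
  have ij: "0 \<le> x - a" "x - a < k" "0 \<le> y - b" "y - b < k" using c xy by auto
  have "(x + int t, b + k + rank c) \<notin> obs_up"
  proof
    assume "(x + int t, b + k + rank c) \<in> obs_up"
    then obtain i' where i': "x + int t = a + i'" "rank c = (i' + 1) * k"
      by (auto simp: obs_up_mem)
    have "rank c < i' * k"
      using digit_pair_less[of "y - b" k 0 "x - a" i'] ij i' t xy by (simp add: rank_def)
    moreover have "(i' + 1) * k = i' * k + k" by (simp add: algebra_simps)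
    ultimately show False using i'(2) k_pos by linarith
  qed
  moreover have "(x + int t, b + k + rank c) \<notin> obs_right"
  proof
    assume "(x + int t, b + k + rank c) \<in> obs_right"
    then obtain c' where c': "c' \<in> Q" "x + int t = a + k + 2 * slot c' + 1" "rank c = rank c'"
      by (auto simp: obs_right_mem simp del: block_mem)
    then show False using rank_inj[OF c'(1) c] t xy by simp
  qed
  moreover have "(x + int t, b + k + rank c) \<notin> obs_down"
  proof
    assume "(x + int t, b + k + rank c) \<in> obs_down"
    then obtain c' where "c' \<in> Q" "b + k + rank c = b + ty c' - 1"
      by (auto simp: obs_down_mem simp del: block_mem)
    then show False using target_bounds[of c'] rank_bounds[OF c] by linarith
  qed
  moreover have "(x + int t, b + k + rank c) \<notin> obs_left" using ij by (simp add: obs_left_mem)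
  ultimately show ?thesis using xy by (simp add: obstacles_mem)
qed

lemma step_right:
  assumes c: "c \<in> Q"
  shows "hits obstacles CR (after_up c)"
    "int (travel obstacles (after_up ` Q) CR (after_up c)) = k + 2 * slot c - (fst c - a)"
    "move_robot obstacles (after_up ` Q) CR (after_up c) = after_right c"
proof -
  have x: "a \<le> fst c" "fst c < a + k" using c by (cases c; simp)+
  define s where "s = nat (k + 2 * slot c + 1 - (fst c - a))"
  have s: "1 \<le> s" "int s = k + 2 * slot c + 1 - (fst c - a)"
    using x slot_bounds[OF c] by (auto simp: s_def)
  have "shift (after_up c) (int s) CR = (a + k + 2 * slot c + 1, b + k + rank c)"
    using s by (simp add: after_up_def)
  moreover have "(a + k + 2 * slot c + 1, b + k + rank c) \<in> obs_right"
    using c by (auto simp: obs_right_mem)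
  ultimately have hit: "shift (after_up c) (int s) CR \<in> obstacles" by (simp add: obstacles_mem)
  have clear: "shift (after_up c) (int t) CR \<notin> obstacles" if "1 \<le> t" "t < s" for t
    using right_ray_clear[OF c, of t] that s by (simp add: after_up_def)
  have "{t. 0 < t \<and> t < s \<and> shift (after_up c) (int t) CR \<in> after_up ` Q} = {}"
    using rank_inj[OF _ c] by (auto simp: after_up_def simp del: block_mem)
  then have ahead: "card {t. 0 < t \<and> t < s \<and> shift (after_up c) (int t) CR \<in> after_up ` Q} = 0"
    by simp
  note move = move_robot_first_obstacle[OF s(1) hit clear ahead]
  show "hits obstacles CR (after_up c)" by (rule move(1))
  show "int (travel obstacles (after_up ` Q) CR (after_up c)) = k + 2 * slot c - (fst c - a)"
    using move(2) s by simp
  show "move_robot obstacles (after_up ` Q) CR (after_up c) = after_right c"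
    using move(3) s by (simp add: after_up_def after_right_def)
qed

text \<open>Move d: after r every robot is alone in its column a + k + 2 * slot c, an even offset from
  the stoppers of move r, so it falls unobstructed to its target row.\<close>

lemma down_ray_clear:
  assumes c: "c \<in> Q" and t: "1 \<le> t" "int t < k + rank c - ty c + 1"
  shows "(a + k + 2 * slot c, b + k + rank c - int t) \<notin> obstacles"
proof -
  let ?z = "(a + k + 2 * slot c, b + k + rank c - int t)"
  have "?z \<notin> obs_up" using slot_bounds[OF c] by (auto simp: obs_up_mem)
  moreover have "?z \<notin> obs_right"
  proof
    assume "?z \<in> obs_right"
    then obtain c' where "2 * slot c = 2 * slot c' + 1" by (auto simp: obs_right_mem)
    then show False by presburger
  qed
  moreover have "?z \<notin> obs_down"
  proof
    assume "?z \<in> obs_down"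
    then obtain c' where c': "c' \<in> Q" "slot c = slot c'" "b + k + rank c - int t = b + ty c' - 1"
      by (auto simp: obs_down_mem simp del: block_mem)
    then show False using slot_inj[OF c'(1) c] t by simp
  qed
  moreover have "?z \<notin> obs_left" using slot_bounds[OF c] k_pos by (simp add: obs_left_mem)
  ultimately show ?thesis by (simp add: obstacles_mem)
qed

lemma step_down:
  assumes c: "c \<in> Q"
  shows "hits obstacles CD (after_right c)"
    "int (travel obstacles (after_right ` Q) CD (after_right c)) = k + rank c - ty c"
    "move_robot obstacles (after_right ` Q) CD (after_right c) = after_down c"
proof -
  define s where "s = nat (k + rank c - ty c + 1)"
  have s: "1 \<le> s" "int s = k + rank c - ty c + 1"
    using rank_bounds[OF c] target_bounds[OF c] by (auto simp: s_def)
  have "shift (after_right c) (int s) CD = (a + k + 2 * slot c, b + ty c - 1)"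
    using s by (simp add: after_right_def)
  moreover have "(a + k + 2 * slot c, b + ty c - 1) \<in> obs_down" using c by (auto simp: obs_down_mem)
  ultimately have hit: "shift (after_right c) (int s) CD \<in> obstacles" by (simp add: obstacles_mem)
  have clear: "shift (after_right c) (int t) CD \<notin> obstacles" if "1 \<le> t" "t < s" for t
    using down_ray_clear[OF c, of t] that s by (simp add: after_right_def)
  have "{t. 0 < t \<and> t < s \<and> shift (after_right c) (int t) CD \<in> after_right ` Q} = {}"
    using slot_inj[OF _ c] by (auto simp: after_right_def simp del: block_mem)
  then have ahead:
    "card {t. 0 < t \<and> t < s \<and> shift (after_right c) (int t) CD \<in> after_right ` Q} = 0"
    by simp
  note move = move_robot_first_obstacle[OF s(1) hit clear ahead]
  show "hits obstacles CD (after_right c)" by (rule move(1))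
  show "int (travel obstacles (after_right ` Q) CD (after_right c)) = k + rank c - ty c"
    using move(2) s by simp
  show "move_robot obstacles (after_right ` Q) CD (after_right c) = after_down c"
    using move(3) s by (simp add: after_right_def after_down_def ty_def)
qed

text \<open>Move l: after d the robots are in their target rows; the robots of target row y stand in
  the order of their target columns, at every other cell, so the wall packs them onto Q.\<close>

lemma left_ray_clear:
  assumes c: "c \<in> Q" and t: "1 \<le> t" "int t < k + 2 * slot c + 1"
  shows "(a + k + 2 * slot c - int t, b + ty c) \<notin> obstacles"
proof -
  let ?z = "(a + k + 2 * slot c - int t, b + ty c)"
  note tc = target_bounds[OF c]
  have "?z \<notin> obs_up"
  proof
    assume "?z \<in> obs_up"
    then obtain i where "0 \<le> i" "i < k" "ty c = k + (i + 1) * k" by (auto simp: obs_up_mem)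
    then show False using tc k_pos mult_nonneg_nonneg[of "i + 1" k] by linarith
  qed
  moreover have "?z \<notin> obs_right"
  proof
    assume "?z \<in> obs_right"
    then obtain c' where "c' \<in> Q" "ty c = k + rank c'" by (auto simp: obs_right_mem simp del: block_mem)
    then show False using rank_bounds[of c'] tc by linarith
  qed
  moreover have "?z \<notin> obs_down"
  proof
    assume "?z \<in> obs_down"
    then obtain c' where c': "c' \<in> Q" "a + k + 2 * slot c - int t = a + k + 2 * slot c'"
        "ty c' = ty c + 1"
      by (auto simp: obs_down_mem simp del: block_mem)
    have "slot c' = ty c * k + k + tx c'" using c'(3) by (simp add: slot_def algebra_simps)
    then have "slot c < slot c'" using target_bounds[OF c'(1)] tc by (simp add: slot_def)
    then show False using c'(2) t by simp
  qed
  moreover have "?z \<notin> obs_left" using t by (simp add: obs_left_mem)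
  ultimately show ?thesis by (simp add: obstacles_mem)
qed

lemma left_robots_ahead:
  assumes c: "c \<in> Q"
  shows "{t. 0 < t \<and> t < nat (k + 2 * slot c + 1) \<and> shift (after_down c) (int t) CL \<in> after_down ` Q}
    = (\<lambda>d. 2 * d) ` {1..nat (tx c)}"
    (is "?ahead = _")
proof (intro equalityI subsetI)
  fix t assume "t \<in> ?ahead"
  then obtain c' where t: "0 < t" and c': "c' \<in> Q"
    "(a + k + 2 * slot c - int t, snd (\<pi> c)) = after_down c'"
    by (auto simp: after_down_def simp del: block_mem)
  then have "a + k + 2 * slot c - int t = a + k + 2 * slot c'" "ty c' = ty c"
    by (auto simp: after_down_def ty_def)
  then have "int t = 2 * (tx c - tx c')" by (simp add: slot_def)
  then show "t \<in> (\<lambda>d. 2 * d) ` {1..nat (tx c)}"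
    using target_bounds[OF c'(1)] t by (intro image_eqI[where x = "nat (tx c - tx c')"]) auto
next
  fix t assume "t \<in> (\<lambda>d. 2 * d) ` {1..nat (tx c)}"
  then obtain d where d: "t = 2 * d" "1 \<le> d" "d \<le> nat (tx c)" by auto
  note tc = target_bounds[OF c]
  define c' where "c' = inv_into Q \<pi> (a + tx c - int d, b + ty c)"
  have "(a + tx c - int d, b + ty c) \<in> Q" using tc d by auto
  then have c': "c' \<in> Q" "\<pi> c' = (a + tx c - int d, b + ty c)"
    using \<pi>_bij unfolding c'_def
    by (auto simp: bij_betw_def intro: inv_into_into f_inv_into_f simp del: block_mem)
  then have "after_down c' = shift (after_down c) (int t) CL"
    using d(1) by (simp add: after_down_def slot_def tx_def ty_def)
  moreover have "int t < k + 2 * slot c + 1"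
  proof -
    have "int d \<le> tx c" using d(3) tc(1) by linarith
    moreover have "tx c \<le> slot c" using tc k_pos by (simp add: slot_def)
    moreover have "int t = 2 * int d" using d(1) by simp
    ultimately show ?thesis using tc by linarith
  qed
  then have "t < nat (k + 2 * slot c + 1)" by simp
  ultimately show "t \<in> ?ahead" using c' d by (auto simp del: block_mem intro: rev_image_eqI)
qed

lemma step_left:
  assumes c: "c \<in> Q"
  shows "hits obstacles CL (after_down c)"
    "int (travel obstacles (after_down ` Q) CL (after_down c)) = k + 2 * slot c - tx c"
    "move_robot obstacles (after_down ` Q) CL (after_down c) = \<pi> c"
proof -
  note tc = target_bounds[OF c]
  define s where "s = nat (k + 2 * slot c + 1)"
  have s: "1 \<le> s" "int s = k + 2 * slot c + 1" using slot_bounds[OF c] k_pos by (auto simp: s_def)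
  have "shift (after_down c) (int s) CL = (a - 1, b + ty c)"
    using s by (simp add: after_down_def ty_def)
  moreover have "(a - 1, b + ty c) \<in> obs_left"
  proof -
    have "2 * k * k = k * k + k * k" by simp
    then show ?thesis using tc k_le_kk unfolding obs_left_mem by linarith
  qed
  ultimately have hit: "shift (after_down c) (int s) CL \<in> obstacles" by (simp add: obstacles_mem)
  have clear: "shift (after_down c) (int t) CL \<notin> obstacles" if "1 \<le> t" "t < s" for t
    using left_ray_clear[OF c, of t] that s by (simp add: after_down_def ty_def)
  have ahead: "card {t. 0 < t \<and> t < s \<and> shift (after_down c) (int t) CL \<in> after_down ` Q}
      = nat (tx c)"
    unfolding s_def left_robots_ahead[OF c] by (subst card_image) (auto simp: inj_on_def)
  note move = move_robot_first_obstacle[OF s(1) hit clear ahead]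
  show "hits obstacles CL (after_down c)" by (rule move(1))
  show "int (travel obstacles (after_down ` Q) CL (after_down c)) = k + 2 * slot c - tx c"
    using move(2) s tc by simp
  show "move_robot obstacles (after_down ` Q) CL (after_down c) = \<pi> c"
    using move(3) s tc by (simp add: after_down_def tx_def prod_eq_iff)
qed

lemma travel_bounds:
  assumes c: "c \<in> Q"
  shows "int (travel obstacles Q CU c) \<le> k * k"
    "int (travel obstacles (after_up ` Q) CR (after_up c)) \<le> 3 * k * k"
    "int (travel obstacles (after_right ` Q) CD (after_right c)) \<le> 3 * k * k"
    "int (travel obstacles (after_down ` Q) CL (after_down c)) \<le> 3 * k * k"
proof -
  have x: "0 \<le> fst c - a" "fst c - a < k" using c by (cases c; simp)+
  have kk3: "3 * k * k = k * k + k * k + k * k" by simp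
  note bounds = slot_bounds[OF c] rank_bounds[OF c] target_bounds[OF c] k_le_kk
  show "int (travel obstacles Q CU c) \<le> k * k"
    using step_up(2)[OF c] cap_bounds[OF x] by simp
  show "int (travel obstacles (after_up ` Q) CR (after_up c)) \<le> 3 * k * k"
    using step_right(2)[OF c] bounds x kk3 by linarith
  show "int (travel obstacles (after_right ` Q) CD (after_right c)) \<le> 3 * k * k"
    using step_down(2)[OF c] bounds kk3 by linarith
  show "int (travel obstacles (after_down ` Q) CL (after_down c)) \<le> 3 * k * k"
    using step_left(2)[OF c] bounds kk3 by linarith
qed

lemma gadget_run:
  assumes v: "v > 0"
  shows "run_defined obstacles Q [CU, CR, CD, CL] id
    \<and> (\<forall>c\<in>Q. run obstacles Q [CU, CR, CD, CL] id c = \<pi> c)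
    \<and> run_time obstacles Q [CU, CR, CD, CL] id v \<le> real_of_int (10 * k * k) / v"
proof -
  define stage :: "nat \<Rightarrow> cell \<Rightarrow> cell" where
    "stage = nth [id, after_up, after_right, after_down, \<pi>]"
  define B :: "nat \<Rightarrow> real" where
    "B = nth (map real_of_int [k * k, 3 * k * k, 3 * k * k, 3 * k * k])"
  have "(a, b) \<in> Q" using k_pos by simp
  then have nonempty: "Q \<noteq> {}" by blast
  have four: "i = 0 \<or> i = 1 \<or> i = 2 \<or> i = 3" if "i < length [CU, CR, CD, CL]" for i :: nat
    using that by auto
  have real_le: "real m \<le> real_of_int B" if "int m \<le> B" for m B
    using that by (metis of_int_le_iff of_int_of_nat_eq)
  have "run_defined obstacles Q [CU, CR, CD, CL] id
    \<and> (\<forall>c\<in>Q. run obstacles Q [CU, CR, CD, CL] id c = stage (length [CU, CR, CD, CL]) c)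
    \<and> run_time obstacles Q [CU, CR, CD, CL] id v \<le> (\<Sum>i<length [CU, CR, CD, CL]. B i) / v"
  proof (rule run_through_stages)
    fix i c assume i: "i < length [CU, CR, CD, CL]" and c: "c \<in> Q"
    then show "hits obstacles ([CU, CR, CD, CL] ! i) (stage i c)"
      and "move_robot obstacles (stage i ` Q) ([CU, CR, CD, CL] ! i) (stage i c) = stage (Suc i) c"
      and "real (travel obstacles (stage i ` Q) ([CU, CR, CD, CL] ! i) (stage i c)) \<le> B i"
      using four[OF i] step_up[OF c] step_right[OF c] step_down[OF c] step_left[OF c]
        travel_bounds[OF c, THEN real_le]
      by (auto simp: stage_def B_def)
  qed (use v nonempty in \<open>auto simp: stage_def block_eq_product\<close>)
  moreover have "(\<Sum>i<length [CU, CR, CD, CL]. B i) = real_of_int (10 * k * k)"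
    by (simp add: B_def numeral_eq_Suc)
  ultimately show ?thesis by (simp add: stage_def)
qed

text \<open>Counting the obstacles: the four families are pairwise disjoint (they are separated by
  their x-coordinates and, between the stoppers of r and d, by parity), and the stoppers of r and
  d are injective images of Q.\<close>

lemma finite_obstacles: "finite obstacles"
  unfolding obstacles_def obs_up_def obs_right_def obs_down_def obs_left_def
  by (simp add: block_eq_product)

lemma card_Q: "card Q = nat k * nat k"
  by (simp add: block_eq_product card_cartesian_product)

lemma obstacle_columns:
  "z \<in> obs_up \<Longrightarrow> a \<le> fst z \<and> fst z < a + k"
  "z \<in> obs_right \<Longrightarrow> \<exists>m \<ge> 0. fst z = a + k + 2 * m + 1"
  "z \<in> obs_down \<Longrightarrow> \<exists>m \<ge> 0. fst z = a + k + 2 * m"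
  "z \<in> obs_left \<Longrightarrow> fst z = a - 1"
  using slot_bounds by (auto simp: obs_up_def obs_right_def obs_down_def obs_left_def)

lemma obstacle_families_disjoint:
  "obs_up \<inter> obs_right = {}" "(obs_up \<union> obs_right) \<inter> obs_down = {}"
  "(obs_up \<union> obs_right \<union> obs_down) \<inter> obs_left = {}"
proof -
  have odd_even: "2 * u + 1 \<noteq> 2 * w" for u w :: int by presburger
  show "obs_up \<inter> obs_right = {}"
    using obstacle_columns(1,2) by fastforce
  show "(obs_up \<union> obs_right) \<inter> obs_down = {}"
    using obstacle_columns(1-3) odd_even by fastforce
  show "(obs_up \<union> obs_right \<union> obs_down) \<inter> obs_left = {}"
    using obstacle_columns k_pos by fastforce
qed

lemma card_obstacles: "int (card obstacles) = 4 * k * k + 1"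
proof -
  have fin: "finite obs_up" "finite obs_right" "finite obs_down" "finite obs_left"
    using finite_obstacles unfolding obstacles_def by simp_all
  have "card obs_up = nat k"
    unfolding obs_up_def by (subst card_image) (auto simp: inj_on_def)
  moreover have "card obs_right = nat k * nat k"
    unfolding obs_right_def using rank_inj card_Q
    by (subst card_image) (auto simp: inj_on_def simp del: block_mem)
  moreover have "card obs_down = nat k * nat k"
    unfolding obs_down_def using slot_inj card_Q
    by (subst card_image) (auto simp: inj_on_def simp del: block_mem)
  moreover have "card obs_left = nat (2 * k * k - k + 1)"
    unfolding obs_left_def by (subst card_image) (auto simp: inj_on_def)
  moreover have "card obstacles = card obs_up + card obs_right + card obs_down + card obs_left"
    unfolding obstacles_def using fin obstacle_families_disjoint by (simp add: card_Un_disjoint)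
  ultimately show ?thesis using k_pos k_le_kk by simp
qed

lemma obstacles_disjoint_Q: "obstacles \<inter> Q = {}"
proof -
  have "z \<notin> Q" if z: "z \<in> obs_up" for z
  proof -
    obtain i where i: "0 \<le> i" "i < k" and z: "z = (a + i, b + k + (i + 1) * k)"
      using z by (cases z) (auto simp: obs_up_mem)
    have "k \<le> (i + 1) * k" using cap_bounds i by blast
    then show ?thesis using z by simp
  qed
  moreover have "z \<notin> Q" if z: "z \<in> obs_right \<union> obs_down \<union> obs_left" for z
  proof -
    have "fst z < a \<or> a + k \<le> fst z" using z by (auto dest!: obstacle_columns(2-4))
    then show ?thesis by (cases z) auto
  qed
  ultimately show ?thesis unfolding obstacles_def by blast
qed

lemma Q_in_square: "Q \<subseteq> block (a - 1) (b - 1) (3 * k * k + 1)"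
proof
  fix z assume "z \<in> Q"
  then obtain x y where xy: "a \<le> x" "x < a + k" "b \<le> y" "y < b + k" and z: "z = (x, y)"
    by (cases z) auto
  have "3 * k * k = k * k + k * k + k * k" by simp
  then show "z \<in> block (a - 1) (b - 1) (3 * k * k + 1)"
    unfolding z using xy k_le_kk by (simp only: block_mem) linarith
qed

lemma obstacles_in_square: "obstacles \<subseteq> block (a - 1) (b - 1) (3 * k * k + 1)"
proof -
  let ?S = "block (a - 1) (b - 1) (3 * k * k + 1)"
  have kk3: "3 * k * k = k * k + k * k + k * k" and kk2: "2 * k * k = k * k + k * k" by simp_all
  have "obs_up \<subseteq> ?S"
  proof
    fix z assume "z \<in> obs_up"
    then obtain i where i: "0 \<le> i" "i < k" and z: "z = (a + i, b + k + (i + 1) * k)"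
      by (auto simp: obs_up_def)
    show "z \<in> ?S" unfolding z using cap_bounds[OF i] i k_pos k_le_kk kk3
      by (simp only: block_mem) linarith
  qed
  moreover have "obs_right \<subseteq> ?S"
  proof
    fix z assume "z \<in> obs_right"
    then obtain c where c: "c \<in> Q" and z: "z = (a + k + 2 * slot c + 1, b + k + rank c)"
      by (auto simp: obs_right_def simp del: block_mem)
    show "z \<in> ?S" unfolding z using slot_bounds[OF c] rank_bounds[OF c] k_le_kk k_pos kk3
      by (simp only: block_mem) linarith
  qed
  moreover have "obs_down \<subseteq> ?S"
  proof
    fix z assume "z \<in> obs_down"
    then obtain c where c: "c \<in> Q" and z: "z = (a + k + 2 * slot c, b + ty c - 1)"
      by (auto simp: obs_down_def simp del: block_mem)
    show "z \<in> ?S" unfolding z using slot_bounds[OF c] target_bounds[OF c] k_le_kk k_pos kk3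
      by (simp only: block_mem) linarith
  qed
  moreover have "obs_left \<subseteq> ?S"
  proof
    fix z assume "z \<in> obs_left"
    then obtain y where y: "b \<le> y" "y \<le> b + 2 * k * k - k" and z: "z = (a - 1, y)"
      by (auto simp: obs_left_def)
    show "z \<in> ?S" unfolding z using y k_le_kk k_pos kk2 kk3
      by (simp only: block_mem) linarith
  qed
  ultimately show ?thesis unfolding obstacles_def by blast
qed

end

theorem theorem1:
  fixes n :: nat and a b :: int and \<pi> :: "cell \<Rightarrow> cell" and v :: real
  assumes "n \<ge> 1" and "v > 0"
    and "bij_betw \<pi> (block a b (int n)) (block a b (int n))"
  shows "\<exists>(Obs :: cell set) x0 y0.
     finite Obs \<and> card Obs = 4 * n^2 + 1
     \<and> Obs \<subseteq> block x0 y0 (3 * int n^2 + 1)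
     \<and> block a b (int n) \<subseteq> block x0 y0 (3 * int n^2 + 1)
     \<and> Obs \<inter> block a b (int n) = {}
     \<and> run_defined Obs (block a b (int n)) [CU, CR, CD, CL] id
     \<and> (\<forall>c\<in>block a b (int n). run Obs (block a b (int n)) [CU, CR, CD, CL] id c = \<pi> c)
     \<and> run_time Obs (block a b (int n)) [CU, CR, CD, CL] id v \<le> 10 * real (n^2) / v"
proof -
  interpret permutation_gadget a b "int n" \<pi> using assms by unfold_locales auto
  note run = gadget_run[OF assms(2)]
  have side: "3 * int n^2 + 1 = 3 * int n * int n + 1" by (simp add: power2_eq_square)
  have "int (card obstacles) = int (4 * n^2 + 1)"
    using card_obstacles by (simp add: power2_eq_square)
  then have card: "card obstacles = 4 * n^2 + 1" by linarith
  have "run_time obstacles Q [CU, CR, CD, CL] id v \<le> real_of_int (10 * int n * int n) / v"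
    using run by blast
  also have "\<dots> = 10 * real (n^2) / v" by (simp add: power2_eq_square)
  finally have time: "run_time obstacles Q [CU, CR, CD, CL] id v \<le> 10 * real (n^2) / v" .
  show ?thesis unfolding side
    by (intro exI[of _ obstacles] exI[of _ "a - 1"] exI[of _ "b - 1"] conjI finite_obstacles card
        obstacles_in_square Q_in_square obstacles_disjoint_Q time
        run[THEN conjunct1] run[THEN conjunct2, THEN conjunct1])
qed

end
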